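(* Let $n\ge p$, $\nu>0$, $\boldsymbol\eta\in\mathbb R^p$ with $\max_j\eta_j<1$, and fix $d_2,\dots,d_p>0$. Let $g_1(d_1)=\exp(\nu\eta_1d_1)/\left[{}_0F_1\!\left(\tfrac n2,\tfrac{D^2}{4}\right)\right]^\nu$ (with $D=\mathrm{diag}(d_1,d_2,\dots,d_p)$) be the unnormalized conditional density of $d_1$ given $(d_2,\dots,d_p)$ under IMDY$(\nu,\boldsymbol\eta)$, and let $m$ be its mode. Then for every $b>0$, the function $Q(d_1)=g_1(d_1+b)/g_1(d_1)$ is strictly decreasing for $d_1>m$.
   Context: $\mathcal V_{n,p}=\{X\in\mathbb R^{n\times p}:X^TX=I_p\}$ with normalized Haar probability measure $[dX]$; ${}_0F_1\!\left(\tfrac n2,\tfrac{D^2}{4}\right)=\int_{\mathcal V_{n,p}}\exp\big(\sum_j d_jX_{jj}\big)[dX]$. IMDY$(\nu,\boldsymbol\eta)$ is the distribution on $\mathbb R_+^p$ with Lebesgue density proportional to $\exp(\nu\boldsymbol\eta^T\boldsymbol d)/[{}_0F_1(\tfrac n2,\tfrac{D^2}4)]^\nu$. *)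

theory Defs
  imports "HOL-Probability.Probability"
begin

text \<open>Real n x p matrices are represented as extensional functions on index pairs
  {..<n} x {..<p} (0-based indices), i.e. elements of the product measurable space.\<close>

definition mat_space :: "nat \<Rightarrow> nat \<Rightarrow> (nat \<times> nat \<Rightarrow> real) measure" where
  "mat_space n p = PiM ({..<n} \<times> {..<p}) (\<lambda>_. borel)"

definition stiefel :: "nat \<Rightarrow> nat \<Rightarrow> (nat \<times> nat \<Rightarrow> real) set" where
  "stiefel n p = {X \<in> space (mat_space n p).
      \<forall>j<p. \<forall>k<p. (\<Sum>i<n. X (i, j) * X (i, k)) = (if j = k then 1 else 0)}"

definition orthogonal_mat :: "nat \<Rightarrow> (nat \<times> nat \<Rightarrow> real) \<Rightarrow> bool" where
  "orthogonal_mat n Q \<longleftrightarrow>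
      (\<forall>j<n. \<forall>k<n. (\<Sum>i<n. Q (i, j) * Q (i, k)) = (if j = k then 1 else 0))"

definition left_mult :: "nat \<Rightarrow> nat \<Rightarrow> (nat \<times> nat \<Rightarrow> real) \<Rightarrow> (nat \<times> nat \<Rightarrow> real)
    \<Rightarrow> (nat \<times> nat \<Rightarrow> real)" where
  "left_mult n p Q X = (\<lambda>(i, j) \<in> {..<n} \<times> {..<p}. \<Sum>k<n. Q (i, k) * X (k, j))"

text \<open>The normalized Haar (uniform) probability measure on V_{n,p}: a probability
  measure concentrated on V_{n,p} and invariant under left multiplication by
  orthogonal matrices (such a measure is unique).\<close>
definition haar_stiefel :: "nat \<Rightarrow> nat \<Rightarrow> (nat \<times> nat \<Rightarrow> real) measure \<Rightarrow> bool" where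
  "haar_stiefel n p \<mu> \<longleftrightarrow>
      prob_space \<mu> \<and> sets \<mu> = sets (mat_space n p) \<and> emeasure \<mu> (stiefel n p) = 1 \<and>
      (\<forall>Q. orthogonal_mat n Q \<longrightarrow> distr \<mu> (mat_space n p) (left_mult n p Q) = \<mu>)"

text \<open>0F1(n/2, D^2/4) = \<integral>_{V_{n,p}} exp(\<Sum>_j d_j X_jj) [dX], for D = diag(d_1..d_p)
  (here d 0, ..., d (p-1)), with \<mu> the Haar measure on V_{n,p}.\<close>
definition hyp0F1 :: "(nat \<times> nat \<Rightarrow> real) measure \<Rightarrow> nat \<Rightarrow> (nat \<Rightarrow> real) \<Rightarrow> real" where
  "hyp0F1 \<mu> p d = (\<integral>X. exp (\<Sum>j<p. d j * X (j, j)) \<partial>\<mu>)"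

text \<open>Unnormalized conditional density of d_1 (index 0) given the other d_j
  under IMDY(nu, eta).\<close>
definition g1 :: "(nat \<times> nat \<Rightarrow> real) measure \<Rightarrow> nat \<Rightarrow> real \<Rightarrow> (nat \<Rightarrow> real)
    \<Rightarrow> (nat \<Rightarrow> real) \<Rightarrow> real \<Rightarrow> real" where
  "g1 \<mu> p \<nu> \<eta> d x = exp (\<nu> * \<eta> 0 * x) / (hyp0F1 \<mu> p (d(0 := x))) powr \<nu>"

end

theory Submission
  imports Defs
begin

text \<open>As a function of d1, 0F1(n/2, D^2/4) is the Laplace transform of the entry X11
  under the Haar measure tilted by exp(d2 X22 + ... + dp Xpp), so its logarithm is convex.
  It is strictly convex because orthogonal invariance (a sign flip and row swaps) prevents
  X11 from being almost surely constant on the Stiefel manifold. Hence the increments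
  ln 0F1(d1 + b) - ln 0F1(d1) strictly increase, and
  Q(d1) = exp(\<nu> \<eta>1 b - \<nu> (ln 0F1(d1 + b) - ln 0F1(d1))) strictly decreases on all of \<real>.\<close>

lemma exp_strict_convex:
  fixes a b s :: real
  assumes "a \<noteq> b" "0 < s" "s < 1"
  shows "exp (s * a + (1 - s) * b) < s * exp a + (1 - s) * exp b"
proof -
  define m where "m = s * a + (1 - s) * b"
  have "a - m = (1 - s) * (a - b)" "b - m = s * (b - a)"
    by (simp_all add: m_def algebra_simps)
  then have "a - m \<noteq> 0" "b - m \<noteq> 0"
    using assms by auto
  \<comment> \<open>strict tangent-line inequality at m\<close>
  then have "exp m * (1 + (a - m)) < exp a" "exp m * (1 + (b - m)) < exp b"
    using exp_minus_greater[of "m - a"] exp_minus_greater[of "m - b"]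
    by (simp_all add: exp_diff field_simps)
  then have "s * (exp m * (1 + (a - m))) + (1 - s) * (exp m * (1 + (b - m)))
      < s * exp a + (1 - s) * exp b"
    using assms by (intro add_strict_mono mult_strict_left_mono) auto
  moreover have "s * (exp m * (1 + (a - m))) + (1 - s) * (exp m * (1 + (b - m))) = exp m"
    by (simp add: m_def algebra_simps)
  ultimately show ?thesis
    by (simp add: m_def)
qed

lemma strict_convex_increment_less:
  fixes f :: "real \<Rightarrow> real"
  assumes conv: "\<And>x1 x2 s. x1 \<noteq> x2 \<Longrightarrow> 0 < s \<Longrightarrow> s < 1 \<Longrightarrow>
      f (s * x1 + (1 - s) * x2) < s * f x1 + (1 - s) * f x2"
    and "0 < b" "x < y"
  shows "f (x + b) - f x < f (y + b) - f y"
proof -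
  define t where "t = b / (y + b - x)"
  have t: "0 < t" "t < 1" "t * (y + b - x) = b"
    using assms(2,3) by (auto simp: t_def field_simps)
  have "(1 - t) * x + (1 - (1 - t)) * (y + b) = x + b" "t * x + (1 - t) * (y + b) = y"
    using t(3) by (simp_all add: algebra_simps)
  moreover have "x \<noteq> y + b"
    using assms(2,3) by simp
  \<comment> \<open>x + b and y both lie strictly between x and y + b\<close>
  ultimately have "f (x + b) < (1 - t) * f x + t * f (y + b)" "f y < t * f x + (1 - t) * f (y + b)"
    using conv[of x "y + b" "1 - t"] conv[of x "y + b" t] t by auto
  then show ?thesis
    by (simp add: algebra_simps)
qed

definition log_laplace :: "'a measure \<Rightarrow> ('a \<Rightarrow> real) \<Rightarrow> ('a \<Rightarrow> real) \<Rightarrow> real \<Rightarrow> real" where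
  "log_laplace M Y C t = ln (\<integral>x. exp (t * Y x + C x) \<partial>M)"

lemma integral_exp_pos:
  fixes f :: "'a \<Rightarrow> real"
  assumes "integrable M (\<lambda>x. exp (f x))" "\<not> (AE x in M. False)"
  shows "0 < (\<integral>x. exp (f x) \<partial>M)"
proof -
  have "(\<integral>x. exp (f x) \<partial>M) \<noteq> 0"
    using assms integral_nonneg_eq_0_iff_AE[OF assms(1)] by auto
  moreover have "0 \<le> (\<integral>x. exp (f x) \<partial>M)"
    by (intro integral_nonneg_AE) simp
  ultimately show ?thesis
    by linarith
qed

lemma integral_exp_convex_comb_less_one:
  fixes u v :: "'a \<Rightarrow> real"
  assumes int: "integrable M (\<lambda>x. exp (u x))" "integrable M (\<lambda>x. exp (v x))"
      "integrable M (\<lambda>x. exp (s * u x + (1 - s) * v x))"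
    and normalized: "(\<integral>x. exp (u x) \<partial>M) = 1" "(\<integral>x. exp (v x) \<partial>M) = 1"
    and distinct: "\<not> (AE x in M. u x = v x)"
    and "0 < s" "s < 1"
  shows "(\<integral>x. exp (s * u x + (1 - s) * v x) \<partial>M) < 1"
proof -
  define h where "h x = s * exp (u x) + (1 - s) * exp (v x) - exp (s * u x + (1 - s) * v x)" for x
  have h_pos: "0 < h x" if "u x \<noteq> v x" for x
    unfolding h_def using exp_strict_convex[OF that assms(7,8)] by simp
  have h_nonneg: "0 \<le> h x" for x
    using h_pos[of x] by (cases "u x = v x") (auto simp: h_def algebra_simps)
  have int_h: "integrable M h"
    unfolding h_def using int by simp
  have "(\<integral>x. h x \<partial>M) \<noteq> 0"
  proof
    assume "(\<integral>x. h x \<partial>M) = 0"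
    then have "AE x in M. h x = 0"
      using integral_nonneg_eq_0_iff_AE[OF int_h] h_nonneg by simp
    then have "AE x in M. u x = v x"
      by (rule eventually_mono) (use h_pos in force)
    with distinct show False ..
  qed
  moreover have "0 \<le> (\<integral>x. h x \<partial>M)"
    by (intro integral_nonneg_AE) (simp add: h_nonneg)
  moreover have "(\<integral>x. h x \<partial>M) = 1 - (\<integral>x. exp (s * u x + (1 - s) * v x) \<partial>M)"
    unfolding h_def using int normalized by simp
  ultimately show ?thesis
    by linarith
qed

text \<open>Normalizing exp(x1 Y + C) and exp(x2 Y + C) to probability densities reduces this to
  integral_exp_convex_comb_less_one; the normalizers combine into the geometric mean K.\<close>

lemma log_laplace_strict_convex:
  fixes Y C :: "'a \<Rightarrow> real"
  assumes int: "\<And>t. integrable M (\<lambda>x. exp (t * Y x + C x))"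
    and nonconst: "\<And>c. \<not> (AE x in M. Y x = c)"
    and "x1 \<noteq> x2" "0 < s" "s < 1"
  shows "log_laplace M Y C (s * x1 + (1 - s) * x2)
    < s * log_laplace M Y C x1 + (1 - s) * log_laplace M Y C x2"
proof -
  define I where "I t = (\<integral>x. exp (t * Y x + C x) \<partial>M)" for t
  define z where "z = s * x1 + (1 - s) * x2"
  define K where "K = exp (s * ln (I x1) + (1 - s) * ln (I x2))"
  define \<alpha> where "\<alpha> x = x1 * Y x + C x - ln (I x1)" for x
  define \<beta> where "\<beta> x = x2 * Y x + C x - ln (I x2)" for x
  have "\<not> (AE x in M. False)"
    using nonconst[of 0] by (metis (mono_tags) eventually_mono)
  then have I_pos: "0 < I t" for t
    unfolding I_def by (rule integral_exp_pos[OF int])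
  have exp_\<alpha>: "exp (\<alpha> x) = exp (x1 * Y x + C x) / I x1"
    and exp_\<beta>: "exp (\<beta> x) = exp (x2 * Y x + C x) / I x2" for x
    using I_pos by (simp_all add: \<alpha>_def \<beta>_def exp_diff)
  have "s * \<alpha> x + (1 - s) * \<beta> x = (z * Y x + C x) - (s * ln (I x1) + (1 - s) * ln (I x2))" for x
    by (simp add: \<alpha>_def \<beta>_def z_def algebra_simps)
  then have exp_comb: "exp (s * \<alpha> x + (1 - s) * \<beta> x) = exp (z * Y x + C x) / K" for x
    by (simp add: K_def exp_diff)
  have "\<not> (AE x in M. \<alpha> x = \<beta> x)"
  proof
    assume "AE x in M. \<alpha> x = \<beta> x"
    then have "AE x in M. Y x = (ln (I x1) - ln (I x2)) / (x1 - x2)"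
      by (rule eventually_mono) (use assms(3) in \<open>simp add: \<alpha>_def \<beta>_def field_simps\<close>)
    with nonconst show False ..
  qed
  then have "(\<integral>x. exp (s * \<alpha> x + (1 - s) * \<beta> x) \<partial>M) < 1"
    using int I_pos[of x1] I_pos[of x2] assms(4,5)
    by (intro integral_exp_convex_comb_less_one) (simp_all add: exp_\<alpha> exp_\<beta> exp_comb I_def)
  then have "I z < K"
    unfolding exp_comb by (simp add: I_def K_def)
  then have "ln (I z) < ln K"
    using I_pos[of z] by simp
  then show ?thesis
    by (simp add: log_laplace_def K_def z_def I_def)
qed

lemma haar_stiefel_AE_stiefel:
  assumes "haar_stiefel n p \<mu>"
  shows "AE X in \<mu>. X \<in> stiefel n p"
proof -
  interpret prob_space \<mu>
    using assms by (simp add: haar_stiefel_def)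
  have "emeasure \<mu> (stiefel n p) = 1"
    using assms by (simp add: haar_stiefel_def)
  moreover from this have "stiefel n p \<in> sets \<mu>"
    using emeasure_notin_sets by fastforce
  ultimately show ?thesis
    by (simp add: AE_in_set_eq_1 emeasure_eq_measure)
qed

lemma stiefel_entry_bound:
  assumes "X \<in> stiefel n p" "i < n" "j < p"
  shows "\<bar>X (i, j)\<bar> \<le> 1"
proof -
  have "(X (i, j))\<^sup>2 \<le> (\<Sum>r<n. X (r, j) * X (r, j))"
    using assms(2)
    by (simp add: power2_eq_square member_le_sum[where f = "\<lambda>r. X (r, j) * X (r, j)"])
  also have "\<dots> = 1"
    using assms(1,3) by (simp add: stiefel_def)
  finally show ?thesis
    by (simp add: abs_square_le_1)
qed

lemma measurable_entry:
  assumes "sets \<mu> = sets (mat_space n p)" "i < n" "j < p"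
  shows "(\<lambda>X. X (i, j)) \<in> borel_measurable \<mu>"
  unfolding measurable_cong_sets[OF assms(1) refl] mat_space_def
  using assms(2,3) by (intro measurable_component_singleton) auto

lemma measurable_left_mult:
  assumes "sets \<mu> = sets (mat_space n p)"
  shows "left_mult n p Q \<in> measurable \<mu> (mat_space n p)"
  unfolding measurable_cong_sets[OF assms refl] left_mult_def mat_space_def
  by (intro measurable_restrict)
    (auto intro!: borel_measurable_sum borel_measurable_times measurable_component_singleton)

definition signed_swap :: "nat \<Rightarrow> real \<Rightarrow> nat \<times> nat \<Rightarrow> real" where
  "signed_swap i s =
    (\<lambda>(r, k). if r = Transposition.transpose 0 i k then if r = 0 then s else 1 else 0)"

lemma transpose_eq_transpose_iff:
  "Transposition.transpose a b c = Transposition.transpose a b c' \<longleftrightarrow> c = c'"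
  by (auto dest: transpose_eq_imp_eq)

lemma transpose_eq_first_iff: "Transposition.transpose a b c = a \<longleftrightarrow> c = b"
  by (auto simp: transpose_eq_iff)

lemma transpose_less: "a < n \<Longrightarrow> b < n \<Longrightarrow> c < n \<Longrightarrow> Transposition.transpose a b c < (n::nat)"
  by (simp add: Transposition.transpose_def)

lemma orthogonal_signed_swap:
  assumes "i < n" "s = 1 \<or> s = -1"
  shows "orthogonal_mat n (signed_swap i s)"
  unfolding orthogonal_mat_def
proof (intro allI impI)
  fix j k
  assume "j < n" "k < n"
  have "(\<Sum>r<n. signed_swap i s (r, j) * signed_swap i s (r, k))
      = (\<Sum>r<n. if r = Transposition.transpose 0 i j then if j = k then 1 else 0 else 0)"
    using assms(2)
    by (intro sum.cong) (auto simp: signed_swap_def transpose_eq_transpose_iff transpose_eq_first_iff)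
  also have "\<dots> = (if j = k then 1 else 0)"
    using assms(1) \<open>j < n\<close> by (simp add: sum.delta' transpose_less)
  finally show "(\<Sum>r<n. signed_swap i s (r, j) * signed_swap i s (r, k)) = (if j = k then 1 else 0)" .
qed

lemma left_mult_signed_swap_corner:
  assumes "0 < p" "i < n"
  shows "left_mult n p (signed_swap i s) X (0, 0) = s * X (i, 0)"
proof -
  have "left_mult n p (signed_swap i s) X (0, 0) = (\<Sum>k<n. signed_swap i s (0, k) * X (k, 0))"
    using assms by (simp add: left_mult_def)
  also have "\<dots> = (\<Sum>k<n. if k = i then s * X (k, 0) else 0)"
    by (intro sum.cong) (auto simp: signed_swap_def transpose_eq_first_iff)
  finally show ?thesis
    using assms(2) by simp
qed

text \<open>Applying signed_swap i 1 moves an almost sure value of X(0,0) to every X(i,0), and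
  signed_swap 0 (-1) forces it to be 0; this contradicts the unit norm of column 0.\<close>

lemma haar_stiefel_corner_not_AE_const:
  assumes "1 \<le> p" "p \<le> n" "haar_stiefel n p \<mu>"
  shows "\<not> (AE X in \<mu>. X (0, 0) = c)"
proof
  assume const: "AE X in \<mu>. X (0, 0) = c"
  have sets: "sets \<mu> = sets (mat_space n p)"
    and invariant: "\<And>Q. orthogonal_mat n Q \<Longrightarrow> distr \<mu> (mat_space n p) (left_mult n p Q) = \<mu>"
    using assms(3) by (auto simp: haar_stiefel_def)
  have signed: "AE X in \<mu>. s * X (i, 0) = c" if "i < n" "s = 1 \<or> s = -1" for i s
  proof -
    have "AE X in distr \<mu> (mat_space n p) (left_mult n p (signed_swap i s)). X (0, 0) = c"
      unfolding invariant[OF orthogonal_signed_swap[OF that]] by (rule const)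
    from AE_distrD[OF measurable_left_mult[OF sets] this] show ?thesis
      using left_mult_signed_swap_corner that assms(1) by simp
  qed
  have "AE X in \<mu>. \<forall>i\<in>{..<n}. X (i, 0) = c"
    using signed[of _ 1] by (intro AE_finite_allI) auto
  moreover have "AE X in \<mu>. - X (0, 0) = c"
    using signed[of 0 "-1"] assms(1,2) by simp
  ultimately have "AE X in \<mu>. False"
    using haar_stiefel_AE_stiefel[OF assms(3)]
  proof eventually_elim
    case (elim X)
    have "X (0, 0) = c" "- X (0, 0) = c"
      using elim assms(1,2) by auto
    then have "c = 0"
      by simp
    have "(\<Sum>i<n. X (i, 0) * X (i, 0)) = 1"
      using elim(3) assms(1) by (simp add: stiefel_def)
    then show False
      using elim(1) \<open>c = 0\<close> by simp
  qed
  then show False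
    using assms(3) prob_space.AE_False by (auto simp: haar_stiefel_def)
qed

lemma haar_stiefel_integrable_exp_diag:
  assumes "p \<le> n" "haar_stiefel n p \<mu>"
  shows "integrable \<mu> (\<lambda>X. exp (\<Sum>j<p. c j * X (j, j)))"
proof -
  interpret prob_space \<mu>
    using assms(2) by (simp add: haar_stiefel_def)
  have sets: "sets \<mu> = sets (mat_space n p)"
    using assms(2) by (simp add: haar_stiefel_def)
  show ?thesis
  proof (rule integrable_const_bound[where B = "exp (\<Sum>j<p. \<bar>c j\<bar>)"])
    show "AE X in \<mu>. norm (exp (\<Sum>j<p. c j * X (j, j))) \<le> exp (\<Sum>j<p. \<bar>c j\<bar>)"
      using haar_stiefel_AE_stiefel[OF assms(2)]
    proof eventually_elim
      case (elim X)
      have "c j * X (j, j) \<le> \<bar>c j\<bar>" if "j < p" for j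
      proof -
        have "\<bar>c j * X (j, j)\<bar> \<le> \<bar>c j\<bar>"
          using stiefel_entry_bound[OF elim, of j j] that assms(1)
          by (simp add: abs_mult mult_left_le)
        then show ?thesis
          by linarith
      qed
      then have "(\<Sum>j<p. c j * X (j, j)) \<le> (\<Sum>j<p. \<bar>c j\<bar>)"
        by (intro sum_mono) simp
      then show ?case
        by simp
    qed
    show "(\<lambda>X. exp (\<Sum>j<p. c j * X (j, j))) \<in> borel_measurable \<mu>"
      using assms(1)
      by (intro measurable_compose[OF _ borel_measurable_exp] borel_measurable_sum
          borel_measurable_times borel_measurable_const measurable_entry[OF sets]) auto
  qed
qed

lemma hyp0F1_pos:
  assumes "p \<le> n" "haar_stiefel n p \<mu>"
  shows "0 < hyp0F1 \<mu> p c"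
  unfolding hyp0F1_def
  using integral_exp_pos[OF haar_stiefel_integrable_exp_diag[OF assms]] assms(2)
    prob_space.AE_False
  by (auto simp: haar_stiefel_def)

lemma sum_fun_upd_zero:
  fixes d g :: "nat \<Rightarrow> real"
  assumes "0 < p"
  shows "(\<Sum>j<p. (d(0 := t)) j * g j) = t * g 0 + (\<Sum>j<p. (d(0 := 0)) j * g j)"
proof -
  obtain q where "p = Suc q"
    using assms gr0_implies_Suc by blast
  then show ?thesis
    by (simp del: sum.lessThan_Suc add: sum.lessThan_Suc_shift)
qed

lemma ln_hyp0F1_increment_less:
  assumes "1 \<le> p" "p \<le> n" "haar_stiefel n p \<mu>" "0 < b" "x < y"
  shows "ln (hyp0F1 \<mu> p (d(0 := x + b))) - ln (hyp0F1 \<mu> p (d(0 := x)))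
    < ln (hyp0F1 \<mu> p (d(0 := y + b))) - ln (hyp0F1 \<mu> p (d(0 := y)))"
proof -
  define C where "C X = (\<Sum>j<p. (d(0 := 0)) j * X (j, j))" for X :: "nat \<times> nat \<Rightarrow> real"
  have diag: "(\<Sum>j<p. (d(0 := t)) j * X (j, j)) = t * X (0, 0) + C X" for t X
    unfolding C_def using assms(1) by (intro sum_fun_upd_zero) simp
  have ln_hyp0F1: "ln (hyp0F1 \<mu> p (d(0 := t))) = log_laplace \<mu> (\<lambda>X. X (0, 0)) C t" for t
    by (simp only: hyp0F1_def log_laplace_def diag)
  have "integrable \<mu> (\<lambda>X. exp (t * X (0, 0) + C X))" for t
    using haar_stiefel_integrable_exp_diag[OF assms(2,3), of "d(0 := t)"] by (simp only: diag)
  from log_laplace_strict_convex[OF this haar_stiefel_corner_not_AE_const[OF assms(1-3)]]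
  show ?thesis
    unfolding ln_hyp0F1 by (rule strict_convex_increment_less[OF _ assms(4,5)])
qed

theorem lemma10:
  fixes n p :: nat and \<nu> m :: real and \<eta> d :: "nat \<Rightarrow> real"
    and \<mu> :: "(nat \<times> nat \<Rightarrow> real) measure"
  assumes "1 \<le> p" and "p \<le> n"
    and "haar_stiefel n p \<mu>"
    and "\<nu> > 0"
    and "\<forall>j<p. \<eta> j < 1"
    and "\<forall>j. 1 \<le> j \<and> j < p \<longrightarrow> d j > 0"
    and mode: "m \<ge> 0" "\<forall>x\<ge>0. g1 \<mu> p \<nu> \<eta> d x \<le> g1 \<mu> p \<nu> \<eta> d m"
  shows "\<forall>b>0. \<forall>x y. m < x \<and> x < y \<longrightarrow>
           g1 \<mu> p \<nu> \<eta> d (y + b) / g1 \<mu> p \<nu> \<eta> d y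
             < g1 \<mu> p \<nu> \<eta> d (x + b) / g1 \<mu> p \<nu> \<eta> d x"
proof (intro allI impI)
  fix b x y :: real
  assume "b > 0" "m < x \<and> x < y"
  define H where "H t = hyp0F1 \<mu> p (d(0 := t))" for t
  have "g1 \<mu> p \<nu> \<eta> d t = exp (\<nu> * \<eta> 0 * t - \<nu> * ln (H t))" for t
    using hyp0F1_pos[OF assms(2,3), of "d(0 := t)"] by (simp add: g1_def H_def powr_def exp_diff)
  then have ratio: "g1 \<mu> p \<nu> \<eta> d (t + b) / g1 \<mu> p \<nu> \<eta> d t
      = exp (\<nu> * \<eta> 0 * b - \<nu> * (ln (H (t + b)) - ln (H t)))" for t
    by (simp add: exp_diff[symmetric] algebra_simps)
  have "ln (H (x + b)) - ln (H x) < ln (H (y + b)) - ln (H y)"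
    unfolding H_def using ln_hyp0F1_increment_less[OF assms(1-3) \<open>b > 0\<close>] \<open>m < x \<and> x < y\<close>
    by blast
  then show "g1 \<mu> p \<nu> \<eta> d (y + b) / g1 \<mu> p \<nu> \<eta> d y
      < g1 \<mu> p \<nu> \<eta> d (x + b) / g1 \<mu> p \<nu> \<eta> d x"
    unfolding ratio using assms(4) by simp
qed

end
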